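(* Let $n$ and $s$ be integers with $\gcd(s,n)=1$. If $p(x)\in\mathcal L_{n,q}$ satisfies $p(x)=\lambda\, p(x)^{[s]}$ for some $\lambda\in\mathbb F_{q^n}^*$, then $p(x)$ has rank at most one, i.e. $p\in\mathcal U_1$.
   Context: $q$ is a prime power, $[i]:=q^i$. $\mathcal L_{n,q}$ is the set of linearized polynomials $f(x)=\sum_{i=0}^{n-1}a_ix^{[i]}$ with $a_i\in\mathbb F_{q^n}$, identified with the $\mathbb F_q$-linear maps of $\mathbb F_{q^n}$ they induce; the rank of $f$ is the $\mathbb F_q$-dimension of its image. For $f(x)=\sum_i a_ix^{[i]}$, $f(x)^{[s]}$ denotes $x^{[s]}\circ f(x)=\sum_{i=0}^{n-1}a_i^{[s]}x^{[(i+s)\bmod n]}$. $\mathcal U_1$ denotes the set of elements of $\mathcal L_{n,q}$ of rank at most one. *)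

theory Defs
  imports "HOL-Algebra.Embedded_Algebras" "HOL-Computational_Algebra.Primes"
begin

text \<open>The field F_{q^n} is a finite HOL-Algebra field R with q^n elements.
  The subfield F_q is the set of fixed points of x \<mapsto> x^q.\<close>

definition Fq :: "('a, 'b) ring_scheme \<Rightarrow> nat \<Rightarrow> 'a set" where
  "Fq R q = {x \<in> carrier R. x [^]\<^bsub>R\<^esub> q = x}"

definition lin_eval :: "('a, 'b) ring_scheme \<Rightarrow> nat \<Rightarrow> nat \<Rightarrow> (nat \<Rightarrow> 'a) \<Rightarrow> 'a \<Rightarrow> 'a" where
  "lin_eval R q n a x = (\<Oplus>\<^bsub>R\<^esub> i \<in> {..<n}. a i \<otimes>\<^bsub>R\<^esub> x [^]\<^bsub>R\<^esub> (q ^ i))"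

text \<open>f^[s] = x^[s] composed with f, with s taken modulo n (x^[n] = x on F_{q^n}).\<close>

definition frob_comp :: "('a, 'b) ring_scheme \<Rightarrow> nat \<Rightarrow> nat \<Rightarrow> int \<Rightarrow> ('a \<Rightarrow> 'a) \<Rightarrow> 'a \<Rightarrow> 'a" where
  "frob_comp R q n s f x = (f x) [^]\<^bsub>R\<^esub> (q ^ nat (s mod int n))"

definition lin_rank :: "('a, 'b) ring_scheme \<Rightarrow> nat \<Rightarrow> ('a \<Rightarrow> 'a) \<Rightarrow> nat" where
  "lin_rank R q f = (THE r. ring.dimension R r (Fq R q) (f ` carrier R))"

end

theory Submission
  imports Defs "HOL-Number_Theory.Cong"
begin

text \<open>Every nonzero value y of p satisfies y = \<lambda> y^[t] with t = s mod n. The quotient c of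
  two such values is therefore fixed by x \<mapsto> x^[t]; as t is invertible modulo n and x^[n] = x
  on F_{q^n}, it is also fixed by x \<mapsto> x^q, i.e. c \<in> F_q. Hence the image of p is contained in
  an F_q-line, and since p is F_q-linear it is that line (or zero).\<close>

lemma coprime_nat_mod_int:
  fixes s :: int
  assumes "gcd s (int n) = 1" and "n > 0"
  shows "coprime (nat (s mod int n)) n"
proof -
  have "coprime (s mod int n) (int n)"
    using assms by (simp add: gcd_eq_1_imp_coprime coprime_mod_left_iff)
  moreover have "int (nat (s mod int n)) = s mod int n"
    using assms(2) by simp
  ultimately show ?thesis
    by (metis coprime_int_iff)
qed

context monoid begin

lemma pow_power_mult_fixed:
  fixes q t j :: nat
  assumes x: "x \<in> carrier G" and fixed: "x [^] (q ^ t) = x"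
  shows "x [^] (q ^ (t * j)) = x"
proof (induction j)
  case 0
  show ?case using x by (simp add: nat_pow_def)
next
  case (Suc j)
  have "x [^] (q ^ (t * Suc j)) = (x [^] (q ^ (t * j))) [^] (q ^ t)"
    using x by (simp add: nat_pow_pow power_add mult.commute)
  then show ?case using Suc fixed by simp
qed

end

context ring begin

lemma Fq_subset: "Fq R q \<subseteq> carrier R"
  by (auto simp: Fq_def)

lemma zero_in_Fq: "q > 0 \<Longrightarrow> \<zero> \<in> Fq R q"
  by (simp add: Fq_def nat_pow_zero)

lemma one_in_Fq: "\<one> \<in> Fq R q"
  by (simp add: Fq_def)

lemma Fq_pow_power: "c \<in> Fq R q \<Longrightarrow> c [^] (q ^ i) = c"
  using pow_power_mult_fixed[of c q 1 i] by (simp add: Fq_def)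

end

context cring begin

lemma lin_eval_closed:
  assumes "\<And>i. i < n \<Longrightarrow> a i \<in> carrier R" and "x \<in> carrier R"
  shows "lin_eval R q n a x \<in> carrier R"
  using assms unfolding lin_eval_def by (intro finsum_closed) auto

lemma lin_eval_Fq_smult:
  assumes a: "\<And>i. i < n \<Longrightarrow> a i \<in> carrier R"
    and c_Fq: "c \<in> Fq R q" and x: "x \<in> carrier R"
  shows "lin_eval R q n a (c \<otimes> x) = c \<otimes> lin_eval R q n a x"
proof -
  have c: "c \<in> carrier R"
    using c_Fq by (simp add: Fq_def)
  have "lin_eval R q n a (c \<otimes> x) = (\<Oplus>i \<in> {..<n}. c \<otimes> (a i \<otimes> x [^] (q ^ i)))"
    unfolding lin_eval_def
  proof (rule finsum_cong')
    fix i assume "i \<in> {..<n}"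
    then have "a i \<in> carrier R" using a by simp
    moreover have "c [^] (q ^ i) = c"
      using c_Fq by (rule Fq_pow_power)
    ultimately show "a i \<otimes> (c \<otimes> x) [^] (q ^ i) = c \<otimes> (a i \<otimes> x [^] (q ^ i))"
      using c x by (simp add: nat_pow_distrib m_lcomm)
  qed (use a c x in auto)
  also have "\<dots> = c \<otimes> lin_eval R q n a x"
    unfolding lin_eval_def using a c x by (subst finsum_rdistr) auto
  finally show ?thesis .
qed

end

context domain begin

lemma twisted_pow_fixed_points_ratio:
  fixes P :: nat
  assumes lam: "lam \<in> carrier R" and y: "y \<in> carrier R" "y \<noteq> \<zero>" and c: "c \<in> carrier R"
    and fixed_y: "y = lam \<otimes> y [^] P"
    and fixed_cy: "c \<otimes> y = lam \<otimes> (c \<otimes> y) [^] P"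
  shows "c [^] P = c"
proof -
  have "c [^] P \<otimes> y = c [^] P \<otimes> (lam \<otimes> y [^] P)"
    using fixed_y by simp
  also have "\<dots> = lam \<otimes> (c \<otimes> y) [^] P"
    using lam y c by (simp add: nat_pow_distrib m_lcomm)
  also have "\<dots> = c \<otimes> y"
    using fixed_cy by simp
  finally show ?thesis
    using m_rcancel[of y "c [^] P" c] y c by simp
qed

end

context field begin

lemma pow_card_carrier:
  assumes fin: "finite (carrier R)" and x: "x \<in> carrier R"
  shows "x [^] card (carrier R) = x"
proof -
  have card_pos: "card (carrier R) > 0"
    using fin card_gt_0_iff by blast
  show ?thesis
  proof (cases "x = \<zero>")
    case True
    then show ?thesis using card_pos by (simp add: nat_pow_zero)
  next
    case False
    interpret units: group "mult_of R" by (rule field_mult_group)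
    have "x [^]\<^bsub>mult_of R\<^esub> order (mult_of R) = \<one>\<^bsub>mult_of R\<^esub>"
      using x False by (intro units.pow_order_eq_1) simp
    then have "x [^] (card (carrier R) - 1) = \<one>"
      using order_mult_of[OF fin] by (simp add: nat_pow_mult_of order_def)
    then have "x [^] (card (carrier R) - 1) \<otimes> x = x"
      using x by simp
    then show ?thesis
      using card_pos nat_pow_Suc[of x "card (carrier R) - 1"] by simp
  qed
qed

lemma pow_power_mod:
  assumes fin: "finite (carrier R)" and card: "card (carrier R) = q ^ n"
    and x: "x \<in> carrier R"
  shows "x [^] (q ^ m) = x [^] (q ^ (m mod n))"
proof -
  have "x [^] (q ^ (n * (m div n))) = x"
    using pow_power_mult_fixed[OF x] pow_card_carrier[OF fin x] card by simp
  then have "(x [^] (q ^ (n * (m div n)))) [^] (q ^ (m mod n)) = x [^] (q ^ (m mod n))"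
    by simp
  moreover have "q ^ m = q ^ (n * (m div n)) * q ^ (m mod n)"
    by (metis mult_div_mod_eq power_add)
  ultimately show ?thesis
    using x by (simp add: nat_pow_pow)
qed

lemma Fq_if_fixed_by_coprime_power:
  assumes fin: "finite (carrier R)" and card: "card (carrier R) = q ^ n"
    and x: "x \<in> carrier R" and fixed: "x [^] (q ^ t) = x" and coprime: "coprime t n"
  shows "x \<in> Fq R q"
proof -
  obtain u where u: "[t * u = 1] (mod n)"
    using cong_solve_coprime_nat[OF coprime] by auto
  have "x [^] q = x [^] (q ^ (1 mod n))"
    using pow_power_mod[OF fin card x, of 1] by simp
  also have "\<dots> = x [^] (q ^ (t * u))"
    using u pow_power_mod[OF fin card x, of "t * u"] by (simp add: cong_def)
  also have "\<dots> = x"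
    by (rule pow_power_mult_fixed[OF x fixed])
  finally show ?thesis
    using x by (simp add: Fq_def)
qed

lemma Fq_m_div_closed:
  assumes "c \<in> Fq R q" and "d \<in> Fq R q" and "d \<noteq> \<zero>"
  shows "c \<otimes> inv d \<in> Fq R q"
proof -
  have c: "c \<in> carrier R" and d: "d \<in> carrier R"
    using assms(1,2) by (auto simp: Fq_def)
  have d_inv: "inv d \<in> carrier R" "inv d \<otimes> d = \<one>"
    using d assms(3) field_Units by auto
  have "(c \<otimes> inv d) [^] q = c \<otimes> inv d"
  proof (rule twisted_pow_fixed_points_ratio[OF one_closed d assms(3)])
    show "d = \<one> \<otimes> d [^] q" and "c \<otimes> inv d \<otimes> d = \<one> \<otimes> (c \<otimes> inv d \<otimes> d) [^] q"
      using assms(1,2) c d_inv by (auto simp: Fq_def m_assoc)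
  qed (use c d_inv in simp)
  then show ?thesis
    using c d_inv by (simp add: Fq_def)
qed

lemma twisted_frobenius_fixed_points_proportional:
  fixes t :: nat
  assumes fin: "finite (carrier R)" and card: "card (carrier R) = q ^ n"
    and coprime: "coprime t n" and lam: "lam \<in> carrier R"
    and x: "x \<in> carrier R" and fixed_x: "x = lam \<otimes> x [^] (q ^ t)"
    and y: "y \<in> carrier R" "y \<noteq> \<zero>" and fixed_y: "y = lam \<otimes> y [^] (q ^ t)"
  shows "\<exists>c \<in> Fq R q. x = c \<otimes> y"
proof -
  define c where "c = x \<otimes> inv y"
  have y_inv: "inv y \<in> carrier R" "inv y \<otimes> y = \<one>"
    using y field_Units by auto
  have c_closed: "c \<in> carrier R" and x_eq: "x = c \<otimes> y"
    using x y y_inv by (auto simp: c_def m_assoc)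
  have "c [^] (q ^ t) = c"
    using twisted_pow_fixed_points_ratio[OF lam y c_closed fixed_y] fixed_x x_eq by simp
  then have "c \<in> Fq R q"
    using Fq_if_fixed_by_coprime_power[OF fin card c_closed _ coprime] by simp
  with x_eq show ?thesis by blast
qed

end

context ring begin

lemma line_extension_memI: "k \<in> K \<Longrightarrow> e \<in> E \<Longrightarrow> k \<otimes> v \<oplus> e \<in> line_extension K v E"
  using line_extension_mem_iff by blast

lemma line_extension_self:
  assumes "\<one> \<in> K" and "\<zero> \<in> E" and "v \<in> carrier R"
  shows "v \<in> line_extension K v E"
  using line_extension_memI[OF assms(1,2), of v] assms(3) by simp

lemma line_extension_superset:
  assumes "\<zero> \<in> K" and "v \<in> carrier R" and "e \<in> E" and "e \<in> carrier R"
  shows "e \<in> line_extension K v E"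
  using line_extension_memI[OF assms(1,3), of v] assms(2,4) by simp

lemma line_extension_zero:
  assumes "K \<subseteq> carrier R" and "v \<in> carrier R"
  shows "line_extension K v {\<zero>} = (\<lambda>k. k \<otimes> v) ` K"
proof -
  have "\<And>k. k \<in> K \<Longrightarrow> k \<otimes> v \<oplus> \<zero> = k \<otimes> v"
    using assms by auto
  then show ?thesis
    by (force simp: line_extension_mem_iff)
qed

lemma line_extension_zero_zero:
  assumes "K \<subseteq> carrier R" and "K \<noteq> {}"
  shows "line_extension K \<zero> {\<zero>} = {\<zero>}"
proof -
  have "(\<lambda>k. k \<otimes> \<zero>) ` K = (\<lambda>k. \<zero>) ` K"
    using assms(1) by (intro image_cong) auto
  then show ?thesis
    using line_extension_zero[OF assms(1) zero_closed] assms(2) by (simp add: image_constant_conv)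
qed

lemma zero_in_dimension:
  assumes "dimension m K E" and "\<zero> \<in> K"
  shows "\<zero> \<in> E"
  using assms
proof (induction rule: dimension.induct)
  case (Suc_dim v E n K)
  then have "\<zero> \<otimes> v \<oplus> \<zero> \<in> line_extension K v E"
    by (intro line_extension_memI) auto
  then show ?case using Suc_dim.hyps(1) by simp
qed simp

lemma dimension_SucE:
  assumes "dimension (Suc m) K E"
  obtains v E' where "v \<in> carrier R" "v \<notin> E'" "dimension m K E'" "E = line_extension K v E'"
  using assms by (cases rule: dimension.cases) auto

lemma dimension_Suc_nonzero:
  assumes "dimension (Suc m) K E" and "\<zero> \<in> K" and "\<one> \<in> K"
  shows "E \<noteq> {\<zero>}"
proof -
  obtain v E' where v: "v \<in> carrier R" "v \<notin> E'" and E': "dimension m K E'"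
    and E: "E = line_extension K v E'"
    using assms(1) by (rule dimension_SucE)
  have "\<zero> \<in> E'"
    using zero_in_dimension[OF E' assms(2)] .
  have "v \<in> E"
    unfolding E using assms(3) \<open>\<zero> \<in> E'\<close> v(1) by (rule line_extension_self)
  then show ?thesis
    using v(2) \<open>\<zero> \<in> E'\<close> by auto
qed

lemma image_eq_line_extension:
  assumes K: "K \<subseteq> carrier R" "\<zero> \<in> K"
    and g_closed: "\<And>x. x \<in> carrier R \<Longrightarrow> g x \<in> carrier R"
    and g_smult: "\<And>c x. c \<in> K \<Longrightarrow> x \<in> carrier R \<Longrightarrow> g (c \<otimes> x) = c \<otimes> g x"
    and proportional: "\<And>x y. x \<in> carrier R \<Longrightarrow> y \<in> carrier R \<Longrightarrow> g y \<noteq> \<zero>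
                          \<Longrightarrow> \<exists>c \<in> K. g x = c \<otimes> g y"
  shows "\<exists>y \<in> carrier R. g ` carrier R = line_extension K y {\<zero>}"
proof (cases "\<exists>y \<in> carrier R. g y \<noteq> \<zero>")
  case True
  then obtain y where y: "y \<in> carrier R" "g y \<noteq> \<zero>" by blast
  have "g ` carrier R = (\<lambda>c. c \<otimes> g y) ` K"
  proof
    show "g ` carrier R \<subseteq> (\<lambda>c. c \<otimes> g y) ` K"
      using proportional[OF _ y] by blast
    show "(\<lambda>c. c \<otimes> g y) ` K \<subseteq> g ` carrier R"
      using g_smult[OF _ y(1), symmetric] K(1) y(1) by blast
  qed
  then show ?thesis
    using line_extension_zero[OF K(1) g_closed[OF y(1)]] g_closed[OF y(1)] by auto
next
  case False
  then have "g ` carrier R = {\<zero>}"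
    by auto
  then show ?thesis
    using line_extension_zero_zero[OF K(1)] K(2) by auto
qed

end

context field begin

text \<open>The dimension theory of the library presupposes a subfield K. Closure of Fq R q under
  addition would need the characteristic of R, so only closure under quotients is assumed here.\<close>

lemma dimension_line_extension_le_one:
  assumes K: "K \<subseteq> carrier R" "\<zero> \<in> K" "\<one> \<in> K"
    and div_closed: "\<And>c d. c \<in> K \<Longrightarrow> d \<in> K \<Longrightarrow> d \<noteq> \<zero> \<Longrightarrow> c \<otimes> inv d \<in> K"
    and y: "y \<in> carrier R"
    and dim: "dimension m K (line_extension K y {\<zero>})"
  shows "m \<le> 1"
proof (rule ccontr)
  let ?L = "line_extension K y {\<zero>}"
  assume "\<not> m \<le> 1"
  then obtain k where "m = Suc (Suc k)"
    by (auto simp: not_le dest: less_imp_Suc_add)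
  with dim obtain v E1 where
    v: "v \<in> carrier R" "v \<notin> E1" "?L = line_extension K v E1" and E1: "dimension (Suc k) K E1"
    by (auto elim: dimension_SucE)
  from E1 obtain w E2 where
    w: "w \<in> carrier R" "w \<notin> E2" "E1 = line_extension K w E2" and E2: "dimension k K E2"
    by (rule dimension_SucE)
  have "\<zero> \<in> E2" and "\<zero> \<in> E1"
    using zero_in_dimension E1 E2 K(2) by blast+
  have "w \<in> E1"
    unfolding w(3) using K(3) \<open>\<zero> \<in> E2\<close> w(1) by (rule line_extension_self)
  have "v \<in> ?L"
    unfolding v(3) using K(3) \<open>\<zero> \<in> E1\<close> v(1) by (rule line_extension_self)
  moreover have "w \<in> ?L"
    unfolding v(3) using K(2) v(1) \<open>w \<in> E1\<close> w(1) by (rule line_extension_superset)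
  ultimately obtain c d where c: "c \<in> K" "v = c \<otimes> y" and d: "d \<in> K" "w = d \<otimes> y"
    using line_extension_zero[OF K(1) y] by auto
  have "d \<noteq> \<zero>"
    using d y w(2) \<open>\<zero> \<in> E2\<close> by auto
  then have d_inv: "inv d \<in> carrier R" "inv d \<otimes> d = \<one>"
    using d K(1) field_Units by auto
  have c_d: "c \<in> carrier R" "d \<in> carrier R"
    using c(1) d(1) K(1) by auto
  have "(c \<otimes> inv d) \<otimes> w = c \<otimes> ((inv d \<otimes> d) \<otimes> y)"
    using c_d d_inv(1) y by (simp add: d(2) m_assoc)
  then have "v = (c \<otimes> inv d) \<otimes> w \<oplus> \<zero>"
    using c_d d_inv y by (simp add: c(2))
  then have "v \<in> E1"
    using w(3) line_extension_memI[OF div_closed[OF c(1) d(1) \<open>d \<noteq> \<zero>\<close>] \<open>\<zero> \<in> E2\<close>] by simp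
  with v(2) show False ..
qed

lemma dimension_line_extension_iff:
  assumes K: "K \<subseteq> carrier R" "\<zero> \<in> K" "\<one> \<in> K"
    and div_closed: "\<And>c d. c \<in> K \<Longrightarrow> d \<in> K \<Longrightarrow> d \<noteq> \<zero> \<Longrightarrow> c \<otimes> inv d \<in> K"
    and y: "y \<in> carrier R"
  shows "dimension m K (line_extension K y {\<zero>}) \<longleftrightarrow> m = (if y = \<zero> then 0 else 1)"
proof -
  have y_mem: "y \<in> line_extension K y {\<zero>}"
    using K(3) _ y by (rule line_extension_self) simp
  have zero_line: "line_extension K \<zero> {\<zero>} = {\<zero>}"
    using line_extension_zero_zero K by auto
  show ?thesis
  proof
    assume dim: "dimension m K (line_extension K y {\<zero>})"
    have "m \<le> 1"
      using dimension_line_extension_le_one[OF K div_closed y dim] by linarith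
    moreover have "m = 0 \<longleftrightarrow> y = \<zero>"
    proof
      assume "m = 0"
      with dim have "line_extension K y {\<zero>} = {\<zero>}"
        by (auto elim: dimension.cases)
      with y_mem show "y = \<zero>"
        by simp
    next
      assume "y = \<zero>"
      with dim zero_line have "dimension m K {\<zero>}"
        by simp
      then show "m = 0"
        by (metis dimension_Suc_nonzero[OF _ K(2,3)] not0_implies_Suc)
    qed
    ultimately show "m = (if y = \<zero> then 0 else 1)"
      by auto
  next
    assume "m = (if y = \<zero> then 0 else 1)"
    then show "dimension m K (line_extension K y {\<zero>})"
      using zero_line Suc_dim[OF y, of "{\<zero>}" 0 K] by auto
  qed
qed

lemma lin_rank_le_one_if_twisted_frobenius_fixed:
  fixes t :: nat
  assumes fin: "finite (carrier R)" and card: "card (carrier R) = q ^ n" and "q > 0"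
    and coprime: "coprime t n" and a: "\<And>i. i < n \<Longrightarrow> a i \<in> carrier R"
    and lam: "lam \<in> carrier R"
    and fixed: "\<And>x. x \<in> carrier R \<Longrightarrow> lin_eval R q n a x = lam \<otimes> lin_eval R q n a x [^] (q ^ t)"
  shows "lin_rank R q (lin_eval R q n a) \<le> 1"
proof -
  let ?f = "lin_eval R q n a"
  note K = Fq_subset zero_in_Fq[OF \<open>q > 0\<close>] one_in_Fq
  have f_closed: "\<And>x. x \<in> carrier R \<Longrightarrow> ?f x \<in> carrier R"
    using a by (rule lin_eval_closed)
  have "\<exists>y \<in> carrier R. ?f ` carrier R = line_extension (Fq R q) y {\<zero>}"
  proof (rule image_eq_line_extension[OF K(1,2) f_closed])
    show "\<And>c x. c \<in> Fq R q \<Longrightarrow> x \<in> carrier R \<Longrightarrow> ?f (c \<otimes> x) = c \<otimes> ?f x"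
      using a by (rule lin_eval_Fq_smult)
    show "\<And>x y. x \<in> carrier R \<Longrightarrow> y \<in> carrier R \<Longrightarrow> ?f y \<noteq> \<zero> \<Longrightarrow> \<exists>c \<in> Fq R q. ?f x = c \<otimes> ?f y"
      using twisted_frobenius_fixed_points_proportional[OF fin card coprime lam] f_closed fixed
      by simp
  qed
  then obtain y where y: "y \<in> carrier R" "?f ` carrier R = line_extension (Fq R q) y {\<zero>}" ..
  have "lin_rank R q ?f = (if y = \<zero> then 0 else 1)"
    unfolding lin_rank_def y(2)
    using dimension_line_extension_iff[OF K Fq_m_div_closed y(1)] by simp
  then show ?thesis
    by simp
qed

end

theorem lemma3p3:
  fixes R :: "('a, 'b) ring_scheme" and q n :: nat and s :: int
    and a :: "nat \<Rightarrow> 'a" and lam :: 'a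
  assumes "field R" and "finite (carrier R)"
    and "\<exists>p k. prime p \<and> k > 0 \<and> q = p ^ k"
    and "n > 0" and "card (carrier R) = q ^ n"
    and "gcd s (int n) = 1"
    and "\<And>i. i < n \<Longrightarrow> a i \<in> carrier R"
    and "lam \<in> carrier R" and "lam \<noteq> \<zero>\<^bsub>R\<^esub>"
    and "\<forall>x \<in> carrier R. lin_eval R q n a x
           = lam \<otimes>\<^bsub>R\<^esub> frob_comp R q n s (lin_eval R q n a) x"
  shows "lin_rank R q (lin_eval R q n a) \<le> 1"
proof -
  have "q > 0"
    using assms(3) prime_gt_0_nat by auto
  then show ?thesis
    using field.lin_rank_le_one_if_twisted_frobenius_fixed[OF assms(1,2,5) _
        coprime_nat_mod_int[OF assms(6,4)] assms(7,8)] assms(10)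
    by (simp add: frob_comp_def)
qed

end
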